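(* Let $n\ge2$, $k\ge1$, and let $\mathbf x\neq\mathbf y$ be vertices of $H_{n,k}$ whose longest common prefix has length $i$ (so $0\le i\le k-1$, i.e. $x_j=y_j$ for $j\le i$ and $x_{i+1}\ne y_{i+1}$). Then the distance between $\mathbf x$ and $\mathbf y$ in $H_{n,k}$ is at most $2(k-i)-1$.
   Context: Let $n\ge 2$ and $k\ge 1$ be integers. $H_{n,k}$ is the simple undirected graph with vertex set $V_{n,k}=\mathbb{Z}_n^k$ (so $|V_{n,k}|=n^k$), whose vertices are written as strings $x_1x_2\ldots x_k$ with $x_j\in\mathbb{Z}_n=\{0,1,\ldots,n-1\}$. Two distinct vertices are adjacent if and only if they are related by one of the following rules. For $i=0$ the prefix $x_1\ldots x_i$ is empty, and "$0\ldots0$" denotes a string of zeros completing the word to length $k$. (R1) $x_1\ldots x_{k-1}x_k\sim x_1\ldots x_{k-1}y_k$ whenever $y_k\neq x_k$. (R2) For $0\le i\le k-2$: $x_1\ldots x_i0\ldots0\sim x_1\ldots x_ix_{i+1}\ldots x_k$ whenever $x_j\neq 0$ for all $i+1\le j\le k$. (R3) For $1\le i\le k-1$: $x_1\ldots x_{i-1}x_i0\ldots0\sim x_1\ldots x_{i-1}y_i0\ldots0$ whenever $x_i,y_i\neq0$ and $x_i\ne y_i$. In particular, $H_{n,1}$ is the complete graph $K_n$. *)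

theory Defs
  imports Main "HOL-Library.Extended_Nat"
begin

text \<open>Vertices of H_{n,k}: words x_1...x_k over Z_n, represented as lists of length k
  with entries in {0..<n}; the paper's position j corresponds to list index j-1.\<close>

definition hverts :: "nat \<Rightarrow> nat \<Rightarrow> nat list set" where
  "hverts n k = {x. length x = k \<and> (\<forall>a\<in>set x. a < n)}"

definition R1 :: "nat \<Rightarrow> nat list \<Rightarrow> nat list \<Rightarrow> bool" where
  "R1 k x y \<longleftrightarrow> take (k - 1) x = take (k - 1) y \<and> x ! (k - 1) \<noteq> y ! (k - 1)"

definition R2 :: "nat \<Rightarrow> nat list \<Rightarrow> nat list \<Rightarrow> bool" where
  "R2 k x y \<longleftrightarrow> (\<exists>i p s. i \<le> k - 2 \<and> k \<ge> 2 \<and> length p = i \<and> length s = k - i \<and>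
      (\<forall>a\<in>set s. a \<noteq> 0) \<and> x = p @ replicate (k - i) 0 \<and> y = p @ s)"

definition R3 :: "nat \<Rightarrow> nat list \<Rightarrow> nat list \<Rightarrow> bool" where
  "R3 k x y \<longleftrightarrow> (\<exists>i p a b. 1 \<le> i \<and> i \<le> k - 1 \<and> length p = i - 1 \<and>
      a \<noteq> 0 \<and> b \<noteq> 0 \<and> a \<noteq> b \<and>
      x = p @ [a] @ replicate (k - i) 0 \<and> y = p @ [b] @ replicate (k - i) 0)"

definition hadj :: "nat \<Rightarrow> nat \<Rightarrow> nat list \<Rightarrow> nat list \<Rightarrow> bool" where
  "hadj n k x y \<longleftrightarrow> x \<in> hverts n k \<and> y \<in> hverts n k \<and> x \<noteq> y \<and>
     (R1 k x y \<or> R2 k x y \<or> R2 k y x \<or> R3 k x y)"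

definition hwalk :: "nat \<Rightarrow> nat \<Rightarrow> nat list list \<Rightarrow> bool" where
  "hwalk n k ws \<longleftrightarrow> ws \<noteq> [] \<and> set ws \<subseteq> hverts n k \<and>
     (\<forall>j. Suc j < length ws \<longrightarrow> hadj n k (ws ! j) (ws ! Suc j))"

text \<open>Graph distance (infinity if no walk exists).\<close>
definition hdist :: "nat \<Rightarrow> nat \<Rightarrow> nat list \<Rightarrow> nat list \<Rightarrow> enat" where
  "hdist n k x y = (INF ws \<in> {ws. hwalk n k ws \<and> hd ws = x \<and> last ws = y}.
                      enat (length ws - 1))"

end

theory Submission
  imports Defs
begin

text \<open>Write \<open>x = p a t\<close> and \<open>y = p b u\<close> with \<open>a \<noteq> b\<close> and \<open>|t| = |u| = r = k - i - 1\<close>.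
  By induction on the suffix, a vertex \<open>q t\<close> is within \<open>|t|\<close> steps both of \<open>q 0\<dots>0\<close> and of
  some \<open>q s\<close> with \<open>s\<close> free of zeros, since (R2) joins \<open>q 0\<dots>0\<close> to every such \<open>q s\<close>.
  If \<open>a = 0\<close>, walk from \<open>x\<close> to \<open>p 0 0\<dots>0\<close>, take one (R2) edge to \<open>p b s\<close> and walk back to \<open>y\<close>;
  if \<open>a, b \<noteq> 0\<close>, walk to \<open>p a 0\<dots>0\<close>, take one (R3) edge to \<open>p b 0\<dots>0\<close> and walk back to \<open>y\<close>.
  Either way the walk has at most \<open>r + 1 + r\<close> edges; for \<open>r = 0\<close> an (R1) edge suffices.\<close>

lemma hadj_sym: "hadj n k x y \<Longrightarrow> hadj n k y x"
  unfolding hadj_def R1_def R3_def by metis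

lemma hadj_zeros_nonzero_suffix:
  assumes "length q + length s = k" "s \<noteq> []" "\<forall>a\<in>set q. a < n" "\<forall>a\<in>set s. a \<noteq> 0 \<and> a < n"
  shows "hadj n k (q @ replicate (length s) 0) (q @ s)"
proof -
  have "0 < n" using assms(2,4) by (cases s) auto
  then have verts: "q @ replicate (length s) 0 \<in> hverts n k" "q @ s \<in> hverts n k"
    using assms by (auto simp: hverts_def)
  have ne: "q @ replicate (length s) 0 \<noteq> q @ s"
    using assms(2,4) by (cases s) auto
  have "R2 k (q @ replicate (length s) 0) (q @ s) \<or> R1 k (q @ replicate (length s) 0) (q @ s)"
  proof (cases "length s \<ge> 2")
    case True
    then have "R2 k (q @ replicate (length s) 0) (q @ s)"
      unfolding R2_def using assms
      by (intro exI[of _ "length q"] exI[of _ q] exI[of _ s]) auto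
    then show ?thesis ..
  next
    case False
    with assms(2) obtain c where "s = [c]" by (cases s; cases "tl s") auto
    then have "R1 k (q @ replicate (length s) 0) (q @ s)"
      using assms by (auto simp: R1_def nth_append)
    then show ?thesis ..
  qed
  then show ?thesis using verts ne by (auto simp: hadj_def)
qed

lemma hadj_change_nonzero_digit:
  assumes "length q + 1 + r = k" "r \<ge> 1" "\<forall>c\<in>set q. c < n"
    and "a \<noteq> 0" "b \<noteq> 0" "a \<noteq> b" "a < n" "b < n"
  shows "hadj n k (q @ a # replicate r 0) (q @ b # replicate r 0)"
proof -
  have "R3 k (q @ [a] @ replicate r 0) (q @ [b] @ replicate r 0)"
    unfolding R3_def using assms
    by (intro exI[of _ "length q + 1"] exI[of _ q] exI[of _ a] exI[of _ b]) auto
  then show ?thesis using assms by (auto simp: hadj_def hverts_def)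
qed

lemma hwalk_Cons:
  assumes "hadj n k x (hd ws)" and "hwalk n k ws"
  shows "hwalk n k (x # ws)"
  unfolding hwalk_def
proof (intro conjI allI impI)
  show "set (x # ws) \<subseteq> hverts n k"
    using assms by (auto simp: hwalk_def hadj_def)
  fix j assume "Suc j < length (x # ws)"
  then show "hadj n k ((x # ws) ! j) ((x # ws) ! Suc j)"
    using assms by (cases j; cases ws) (auto simp: hwalk_def)
qed simp

inductive hreach :: "nat \<Rightarrow> nat \<Rightarrow> nat \<Rightarrow> nat list \<Rightarrow> nat list \<Rightarrow> bool" for n k where
  refl: "x \<in> hverts n k \<Longrightarrow> hreach n k d x x"
| step: "hadj n k x y \<Longrightarrow> hreach n k d y z \<Longrightarrow> hreach n k (Suc d) x z"

lemma hreach_mono: "hreach n k d x y \<Longrightarrow> d \<le> e \<Longrightarrow> hreach n k e x y"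
proof (induction arbitrary: e rule: hreach.induct)
  case (refl x d)
  then show ?case by (simp add: hreach.refl)
next
  case (step x y d z)
  then obtain e' where "e = Suc e'" "d \<le> e'" by (cases e) auto
  with step show ?case by (auto intro: hreach.step)
qed

lemma hreach_trans: "hreach n k a x y \<Longrightarrow> hreach n k b y z \<Longrightarrow> hreach n k (a + b) x z"
proof (induction rule: hreach.induct)
  case (refl x a)
  then show ?case using hreach_mono by fastforce
next
  case (step x y a z)
  then show ?case by (auto intro: hreach.step)
qed

lemma hreach_adj: "hadj n k x y \<Longrightarrow> hreach n k 1 x y"
  by (auto intro!: hreach.intros simp: hadj_def)

lemma hreach_sym: "hreach n k d x y \<Longrightarrow> hreach n k d y x"
proof (induction rule: hreach.induct)
  case (refl x d)
  then show ?case by (rule hreach.refl)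
next
  case (step x y d z)
  from hreach_trans[OF step.IH hreach_adj[OF hadj_sym[OF step.hyps(1)]]]
  show ?case by simp
qed

lemma hdist_le_if_hreach:
  assumes "hreach n k d x y"
  shows "hdist n k x y \<le> enat d"
proof -
  from assms have "\<exists>ws. hwalk n k ws \<and> hd ws = x \<and> last ws = y \<and> length ws \<le> Suc d"
  proof (induction rule: hreach.induct)
    case (refl x d)
    then show ?case by (intro exI[of _ "[x]"]) (auto simp: hwalk_def)
  next
    case (step x y d z)
    then obtain ws where ws: "hwalk n k ws" "hd ws = y" "last ws = z" "length ws \<le> Suc d"
      by blast
    with step.hyps have "hwalk n k (x # ws)" by (auto intro: hwalk_Cons)
    with ws show ?case
      by (intro exI[of _ "x # ws"]) (auto simp: hwalk_def)
  qed
  then obtain ws where ws: "hwalk n k ws" "hd ws = x" "last ws = y" "length ws \<le> Suc d"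
    by blast
  then have "hdist n k x y \<le> enat (length ws - 1)"
    unfolding hdist_def by (intro INF_lower) simp
  also have "\<dots> \<le> enat d" using ws(4) by simp
  finally show ?thesis .
qed

lemma hreach_suffix_normal_forms:
  assumes "length q + length t = k" "n \<ge> 2" "\<forall>a\<in>set q. a < n" "\<forall>a\<in>set t. a < n"
  shows "hreach n k (length t) (q @ t) (q @ replicate (length t) 0)
    \<and> (\<exists>s. length s = length t \<and> (\<forall>a\<in>set s. a \<noteq> 0 \<and> a < n)
           \<and> hreach n k (length t) (q @ t) (q @ s))"
  using assms
proof (induction t arbitrary: q)
  case Nil
  then have "hreach n k 0 q q" by (intro hreach.refl) (auto simp: hverts_def)
  then show ?case by auto
next
  case (Cons c w)
  let ?r = "length (c # w)"
  have zeros: "q @ replicate ?r 0 = (q @ [0]) @ replicate (length w) 0"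
    by (simp add: replicate_append_same)
  from Cons.prems have IH:
    "hreach n k (length w) (q @ c # w) ((q @ [c]) @ replicate (length w) 0)"
    "\<exists>s. length s = length w \<and> (\<forall>a\<in>set s. a \<noteq> 0 \<and> a < n)
       \<and> hreach n k (length w) (q @ c # w) ((q @ [c]) @ s)"
    using Cons.IH[of "q @ [c]"] by auto
  show ?case
  proof (cases "c = 0")
    case True
    then have "hreach n k (length w) (q @ c # w) (q @ replicate ?r 0)"
      using IH(1) zeros by simp
    moreover have "hadj n k (q @ replicate ?r 0) (q @ replicate ?r 1)"
      using hadj_zeros_nonzero_suffix[of q "replicate ?r 1"] Cons.prems by auto
    ultimately have "hreach n k ?r (q @ c # w) (q @ replicate ?r 0)"
      and "hreach n k ?r (q @ c # w) (q @ replicate ?r 1)"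
      using hreach_trans[of n k "length w" _ _ 1] hreach_adj by (auto intro: hreach_mono)
    with Cons.prems show ?thesis
      by (intro conjI exI[of _ "replicate ?r 1"]) auto
  next
    case False
    from IH(2) obtain s where s: "length s = length w" "\<forall>a\<in>set s. a \<noteq> 0 \<and> a < n"
      "hreach n k (length w) (q @ c # w) (q @ c # s)" by auto
    have "hadj n k (q @ c # s) (q @ replicate ?r 0)"
      using hadj_zeros_nonzero_suffix[of q "c # s"] s False Cons.prems
      by (auto intro: hadj_sym)
    from hreach_trans[OF s(3) hreach_adj[OF this]]
    have "hreach n k ?r (q @ c # w) (q @ replicate ?r 0)" using s(1) by simp
    with s False Cons.prems show ?thesis
      by (intro conjI exI[of _ "c # s"]) (auto intro: hreach_mono)
  qed
qed

lemma hreach_zero_vs_nonzero_digit: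
  assumes "n \<ge> 2" "length p + 1 + length t = k" "length u = length t"
    and "\<forall>c\<in>set p. c < n" "\<forall>c\<in>set t. c < n" "\<forall>c\<in>set u. c < n" "b \<noteq> 0" "b < n"
  shows "hreach n k (2 * length t + 1) (p @ 0 # t) (p @ b # u)"
proof -
  let ?r = "length t"
  have "hreach n k ?r ((p @ [0]) @ t) ((p @ [0]) @ replicate ?r 0)"
    using hreach_suffix_normal_forms[of "p @ [0]" t k n] assms by auto
  then have to_zeros: "hreach n k ?r (p @ 0 # t) (p @ replicate (Suc ?r) 0)"
    by (simp add: replicate_append_same[symmetric])
  obtain s where s: "length s = ?r" "\<forall>a\<in>set s. a \<noteq> 0 \<and> a < n"
    "hreach n k ?r (p @ b # u) (p @ b # s)"
    using hreach_suffix_normal_forms[of "p @ [b]" u k n] assms by auto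
  have "hadj n k (p @ replicate (Suc ?r) 0) (p @ b # s)"
    using hadj_zeros_nonzero_suffix[of p "b # s"] assms s by auto
  from hreach_trans[OF hreach_trans[OF to_zeros hreach_adj[OF this]] hreach_sym[OF s(3)]]
  show ?thesis by (simp add: mult_2)
qed

lemma hreach_nonzero_digits:
  assumes "n \<ge> 2" "length p + 1 + length t = k" "length u = length t" "t \<noteq> []"
    and "\<forall>c\<in>set p. c < n" "\<forall>c\<in>set t. c < n" "\<forall>c\<in>set u. c < n"
    and "a \<noteq> 0" "b \<noteq> 0" "a \<noteq> b" "a < n" "b < n"
  shows "hreach n k (2 * length t + 1) (p @ a # t) (p @ b # u)"
proof -
  let ?r = "length t"
  have from_x: "hreach n k ?r (p @ a # t) (p @ a # replicate ?r 0)"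
    using hreach_suffix_normal_forms[of "p @ [a]" t k n] assms by auto
  have from_y: "hreach n k ?r (p @ b # u) (p @ b # replicate ?r 0)"
    using hreach_suffix_normal_forms[of "p @ [b]" u k n] assms by auto
  have "hadj n k (p @ a # replicate ?r 0) (p @ b # replicate ?r 0)"
    using hadj_change_nonzero_digit[of p ?r k n a b] assms by (simp add: Suc_le_eq)
  from hreach_trans[OF hreach_trans[OF from_x hreach_adj[OF this]] hreach_sym[OF from_y]]
  show ?thesis by (simp add: mult_2)
qed

lemma hreach_distinct_digits:
  assumes "n \<ge> 2" "length p + 1 + length t = k" "length u = length t"
    and "\<forall>c\<in>set p. c < n" "\<forall>c\<in>set t. c < n" "\<forall>c\<in>set u. c < n"
    and "a \<noteq> b" "a < n" "b < n"
  shows "hreach n k (2 * length t + 1) (p @ a # t) (p @ b # u)"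
proof -
  consider "a = 0" | "b = 0" | "t = []" | "a \<noteq> 0" "b \<noteq> 0" "t \<noteq> []" by blast
  then show ?thesis
  proof cases
    case 1
    with assms(7,9) show ?thesis using hreach_zero_vs_nonzero_digit[OF assms(1-6)] by simp
  next
    case 2
    have "hreach n k (2 * length u + 1) (p @ 0 # u) (p @ a # t)"
      by (rule hreach_zero_vs_nonzero_digit) (use assms 2 in auto)
    with 2 assms(3) show ?thesis using hreach_sym by fastforce
  next
    case 3
    with assms(2,3) have "u = []" "k - 1 = length p" by auto
    with assms have "hadj n k (p @ [a]) (p @ [b])"
      by (auto simp: hadj_def hverts_def R1_def)
    with 3 \<open>u = []\<close> show ?thesis using hreach_adj by fastforce
  next
    case 4
    show ?thesis by (rule hreach_nonzero_digits) (use assms 4 in auto)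
  qed
qed

theorem mainTheorem8:
  fixes n k i :: nat and x y :: "nat list"
  assumes "n \<ge> 2" and "k \<ge> 1"
    and "x \<in> hverts n k" and "y \<in> hverts n k" and "x \<noteq> y"
    and "i < k" and "take i x = take i y" and "x ! i \<noteq> y ! i"
  shows "hdist n k x y \<le> enat (2 * (k - i) - 1)"
proof -
  have lens: "length x = k" "length y = k" and digits: "\<forall>c\<in>set x. c < n" "\<forall>c\<in>set y. c < n"
    using assms(3,4) by (auto simp: hverts_def)
  have x: "x = take i x @ x ! i # drop (Suc i) x" and y: "y = take i x @ y ! i # drop (Suc i) y"
    using id_take_nth_drop lens assms(6,7) by metis+
  have "hreach n k (2 * length (drop (Suc i) x) + 1)
          (take i x @ x ! i # drop (Suc i) x) (take i x @ y ! i # drop (Suc i) y)"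
    using assms(1,6,8) lens digits
    by (intro hreach_distinct_digits) (auto dest: in_set_takeD in_set_dropD)
  then have "hreach n k (2 * (k - i) - 1) x y"
    using x y lens assms(6) by (auto elim!: hreach_mono)
  then show ?thesis by (rule hdist_le_if_hreach)
qed

end
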